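(* Let $t\in\mathbb{Q}$, $t\neq2$, and let $x\in\overline{\mathbb{Q}}$ satisfy $f_t(x)=0$. Put $y=\sum_{i=0}^5 a_i x^i$. Then $f_t(y)=0$ and the point $[x,y,1]$ lies on $F_5\cap C_t$.
   Context: $F_5$ is the Fermat curve $x^5+y^5+z^5=0$ in $\mathbb{P}^2$. For $t\in\mathbb{Q}$, $t\neq2$, $C_t$ is the conic $x^2+y^2+z^2+t(xy+xz+yz)=0$. Put $u=\frac{3t^2-2t+2}{t^2+t-1}$, $v=\frac{t^5-5t^4+10t^3-20t^2+15t-7}{(t-2)(t^2+t-1)^2}$, $w=\frac{-3t^5+10t^4-20t^3+20t^2-20t+6}{(t-2)(t^2+t-1)^2}$, and $f_t=X^6+uX^5+vX^4+wX^3+vX^2+uX+1\in\mathbb{Q}[X]$. Put $s=(t^4-3t^3-t^2+3t+1)(t-2)$ (nonzero for rational $t\ne2$) and $a_0=-\frac{(t^2+1)(t^3-t^2+2t-3)}{s}$, $a_1=-\frac{3t^7-9t^6+16t^5-15t^4+10t^3-11t^2+8t-7}{(t^2+t-1)s}$, $a_2=\frac{2t^8-14t^7+52t^6-99t^5+100t^4-54t^3+38t^2-44t+13}{(t^2+t-1)(t-2)s}$, $a_3=\frac{t^8+t^7-21t^6+65t^5-90t^4+78t^3-57t^2+32t-15}{(t^2+t-1)(t-2)s}$, $a_4=-\frac{2t^5-6t^4+13t^3-14t^2+7t-5}{s}$, $a_5=-\frac{(t^2+t-1)(t^3-t^2+2t-3)}{s}$. *)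

theory Defs
  imports Complex_Main "HOL-Computational_Algebra.Polynomial"
begin

definition ft_u :: "rat \<Rightarrow> rat" where
  "ft_u t = (3*t^2 - 2*t + 2) / (t^2 + t - 1)"

definition ft_v :: "rat \<Rightarrow> rat" where
  "ft_v t = (t^5 - 5*t^4 + 10*t^3 - 20*t^2 + 15*t - 7) / ((t - 2) * (t^2 + t - 1)^2)"

definition ft_w :: "rat \<Rightarrow> rat" where
  "ft_w t = (-3*t^5 + 10*t^4 - 20*t^3 + 20*t^2 - 20*t + 6) / ((t - 2) * (t^2 + t - 1)^2)"

definition f_t :: "rat \<Rightarrow> rat poly" where
  "f_t t = [:1, ft_u t, ft_v t, ft_w t, ft_v t, ft_u t, 1:]"

definition s_t :: "rat \<Rightarrow> rat" where
  "s_t t = (t^4 - 3*t^3 - t^2 + 3*t + 1) * (t - 2)"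

definition a_coef :: "rat \<Rightarrow> nat \<Rightarrow> rat" where
  "a_coef t i =
    (if i = 0 then - ((t^2 + 1) * (t^3 - t^2 + 2*t - 3)) / s_t t
     else if i = 1 then - (3*t^7 - 9*t^6 + 16*t^5 - 15*t^4 + 10*t^3 - 11*t^2 + 8*t - 7)
                          / ((t^2 + t - 1) * s_t t)
     else if i = 2 then (2*t^8 - 14*t^7 + 52*t^6 - 99*t^5 + 100*t^4 - 54*t^3 + 38*t^2 - 44*t + 13)
                          / ((t^2 + t - 1) * (t - 2) * s_t t)
     else if i = 3 then (t^8 + t^7 - 21*t^6 + 65*t^5 - 90*t^4 + 78*t^3 - 57*t^2 + 32*t - 15)
                          / ((t^2 + t - 1) * (t - 2) * s_t t)
     else if i = 4 then - (2*t^5 - 6*t^4 + 13*t^3 - 14*t^2 + 7*t - 5) / s_t t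
     else if i = 5 then - ((t^2 + t - 1) * (t^3 - t^2 + 2*t - 3)) / s_t t
     else 0)"

text \<open>Fermat quintic F_5 : x^5+y^5+z^5 = 0 and conic C_t (homogeneous equations,
  so membership of a projective point is tested on any representative).\<close>
definition on_F5 :: "complex \<Rightarrow> complex \<Rightarrow> complex \<Rightarrow> bool" where
  "on_F5 x y z \<longleftrightarrow> x^5 + y^5 + z^5 = 0"

definition on_Ct :: "rat \<Rightarrow> complex \<Rightarrow> complex \<Rightarrow> complex \<Rightarrow> bool" where
  "on_Ct t x y z \<longleftrightarrow> x^2 + y^2 + z^2 + of_rat t * (x*y + x*z + y*z) = 0"

end

theory Submission
  imports Defs "HOL-Computational_Algebra.Primes"
begin

text \<open>All claims are polynomial identities in the root \<open>x\<close> of \<open>f\<^sub>t\<close>, i.e. identities in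
  \<open>\<rat>(t)[X]/(f\<^sub>t)\<close>. We compute the remainders of \<open>y, y\<^sup>2, \<dots>, y\<^sup>6\<close> modulo \<open>f\<^sub>t\<close>,
  each from two earlier ones; the remainder of \<open>y\<^sup>5\<close> is \<open>-1 - x\<^sup>5\<close>, which is the Fermat
  equation. Substituting the remainders into \<open>f\<^sub>t(y)\<close> and into the equation of \<open>C\<^sub>t\<close> leaves
  polynomials in \<open>x\<close> that vanish modulo \<open>f\<^sub>t\<close>. The denominators that occur are
  \<open>t - 2\<close>, \<open>t\<^sup>2 + t - 1\<close> and \<open>t\<^sup>4 - 3t\<^sup>3 - t\<^sup>2 + 3t + 1\<close>; the last two have no
  rational roots because completing the square turns them into \<open>(\<dots>)\<^sup>2 - 5\<close>.\<close>

lemma rat_square_ne_prime: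
  assumes "prime (p::int)"
  shows "(r::rat)^2 \<noteq> of_int p"
proof
  assume sq: "r^2 = of_int p"
  obtain a b where ab: "quotient_of r = (a, b)" by (cases "quotient_of r")
  have "b > 0" and "coprime a b" and "r = of_int a / of_int b"
    using ab quotient_of_denom_pos quotient_of_coprime quotient_of_div by blast+
  with sq have "of_int (a^2) = (of_int (p * b^2) :: rat)"
    by (simp add: field_simps)
  hence ab_eq: "a^2 = p * b^2" by (simp only: of_int_eq_iff)
  hence "p dvd a" using assms prime_dvd_power by (metis dvd_triv_left)
  then obtain k where "a = p * k" ..
  with ab_eq have "p * (p * k^2) = p * b^2" by (simp add: power2_eq_square ac_simps)
  hence "b^2 = p * k^2" using prime_gt_0_int[OF assms] by simp
  hence "p dvd b" using assms prime_dvd_power by (metis dvd_triv_left)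
  with \<open>p dvd a\<close> \<open>coprime a b\<close> assms show False
    by (metis coprime_common_divisor not_prime_unit)
qed

definition q2 :: "'a::comm_ring_1 \<Rightarrow> 'a" where
  "q2 T = T^2 + T - 1"

definition q4 :: "'a::comm_ring_1 \<Rightarrow> 'a" where
  "q4 T = T^4 - 3*T^3 - T^2 + 3*T + 1"

lemma q2_rat_nonzero: "q2 (t::rat) \<noteq> 0"
proof
  assume "q2 t = 0"
  hence "(2*t + 1)^2 = of_int 5" by (simp add: q2_def algebra_simps power2_eq_square)
  thus False using rat_square_ne_prime[of 5] by simp
qed

lemma q4_rat_nonzero: "q4 (t::rat) \<noteq> 0"
proof
  assume q: "q4 t = 0"
  hence "t \<noteq> 0" by (auto simp: q4_def)
  hence "(2*(t - 1/t) - 3)^2 - 5 = 4 * q4 t / t^2"  \<comment> \<open>\<open>q4 t / t\<^sup>2\<close> is a quadratic in \<open>t - 1/t\<close>\<close>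
    by (simp add: q4_def field_simps power2_eq_square) algebra
  with q have "(2*(t - 1/t) - 3)^2 = of_int 5" by simp
  thus False using rat_square_ne_prime[of 5] by simp
qed

definition f_t_cleared :: "'a::comm_ring_1 \<Rightarrow> 'a \<Rightarrow> 'a" where
  "f_t_cleared T x =
     (T - 2) * q2 T^2 * (1 + x^6) + (T - 2) * q2 T * (3*T^2 - 2*T + 2) * (x + x^5)
   + (T^5 - 5*T^4 + 10*T^3 - 20*T^2 + 15*T - 7) * (x^2 + x^4)
   + (- 3*T^5 + 10*T^4 - 20*T^3 + 20*T^2 - 20*T + 6) * x^3"

text \<open>\<open>Y\<^sub>k T x\<close>, divided by the factor multiplying \<open>y\<^sup>k\<close> in \<open>power_reductions\<close>,
  is the remainder of \<open>y\<^sup>k\<close> modulo \<open>f\<^sub>t\<close>.\<close>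

definition Y1 :: "'a::comm_ring_1 \<Rightarrow> 'a \<Rightarrow> 'a" where
  "Y1 T x =
     (6 - 13*T + 11*T^2 - 13*T^3 + 5*T^4 + 2*T^5 - T^6 + 2*T^7 - T^8)
   + (- 14 + 23*T - 30*T^2 + 31*T^3 - 40*T^4 + 47*T^5 - 34*T^6 + 15*T^7 - 3*T^8)*x
   + (13 - 44*T + 38*T^2 - 54*T^3 + 100*T^4 - 99*T^5 + 52*T^6 - 14*T^7 + 2*T^8)*x^2
   + (- 15 + 32*T - 57*T^2 + 78*T^3 - 90*T^4 + 65*T^5 - 21*T^6 + T^7 + T^8)*x^3
   + (10 - 29*T + 44*T^2 - 56*T^3 + 30*T^4 + 5*T^5 - 13*T^6 + 8*T^7 - 2*T^8)*x^4
   + (- 6 + 19*T - 12*T^2 - 8*T^3 + 5*T^4 - 2*T^5 + 3*T^6 + T^7 - T^8)*x^5"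

definition Y2 :: "'a::comm_ring_1 \<Rightarrow> 'a \<Rightarrow> 'a" where
  "Y2 T x =
     (1 - T - 5*T^3 + 5*T^4 + 2*T^5 - 2*T^6)
   + (6*T - 5*T^2 + 5*T^3 - 10*T^4 + 10*T^5 - 3*T^6)*x
   + (1 - 3*T + 10*T^2 - 15*T^3 + 20*T^4 - 13*T^5 + 4*T^6)*x^2
   + (5*T - 10*T^2 + 20*T^3 - 15*T^4 + 5*T^5)*x^3
   + (- 4*T + 10*T^2 - 10*T^3 + 5*T^4 + 5*T^5 - 3*T^6)*x^4
   + (2*T - 5*T^2 + 5*T^4 - T^6)*x^5"

definition Y3 :: "'a::comm_ring_1 \<Rightarrow> 'a \<Rightarrow> 'a" where
  "Y3 T x =
     (4 - 4*T - 9*T^2 + 15*T^3 - 15*T^4 + 3*T^5 + 7*T^6 - 3*T^7)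
   + (- 6 + 7*T + 8*T^2 - 35*T^3 + 35*T^4 - 22*T^5 + 14*T^6 - 4*T^7)*x
   + (7 - 15*T - 13*T^2 + 45*T^3 - 60*T^4 + 49*T^5 - 20*T^6 + 4*T^7)*x^2
   + (- 7 + 10*T + 8*T^2 - 50*T^3 + 60*T^4 - 29*T^5 + 5*T^6 + T^7)*x^3
   + (6 - 9*T - 17*T^2 + 40*T^3 - 25*T^4 - 3*T^5 + 12*T^6 - 4*T^7)*x^4
   + (- 2 + 3*T + 9*T^2 - 15*T^3 - 5*T^4 + 11*T^5 + T^6 - 2*T^7)*x^5"

definition Y4 :: "'a::comm_ring_1 \<Rightarrow> 'a \<Rightarrow> 'a" where
  "Y4 T x =
     (- 1 + 4*T - 10*T^3 + 5*T^4 + 3*T^5 - 2*T^6)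
   + (- 8*T + 10*T^3 - 10*T^4 + 5*T^5 - T^6)*x
   + (- 2 + 4*T - 5*T^2 - 10*T^3 + 15*T^4 - 9*T^5 + 3*T^6)*x^2
   + (- 8*T + 10*T^3 - 10*T^4 + 5*T^5 - T^6)*x^3
   + (- 1 + 4*T - 10*T^3 + 5*T^4 + 3*T^5 - 2*T^6)*x^4"

definition Y6 :: "'a::comm_ring_1 \<Rightarrow> 'a \<Rightarrow> 'a" where
  "Y6 T x =
     (4 - 10*T - 6*T^2 + 29*T^3 - 12*T^4 - 12*T^5 + 10*T^6 - 2*T^7 - 2*T^8 + T^9)*x
   + (- 1 + 18*T + 2*T^2 - 15*T^3 - 3*T^4 - 12*T^5 + 36*T^6 - 31*T^7 + 10*T^8 - T^9)*x^2
   + (6 - 8*T + 8*T^2 + 3*T^4 + 22*T^5 - 66*T^6 + 51*T^7 - 15*T^8 + T^9)*x^3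
   + (- 1 + 18*T + 2*T^2 - 15*T^3 - 3*T^4 - 12*T^5 + 36*T^6 - 31*T^7 + 10*T^8 - T^9)*x^4
   + (4 - 10*T - 6*T^2 + 29*T^3 - 12*T^4 - 12*T^5 + 10*T^6 - 2*T^7 - 2*T^8 + T^9)*x^5"

lemma mult_reduction:
  fixes ya yb Da Db Dc Za Zb Zc :: "'a::idom"
  assumes "ya * Da = Za" "yb * Db = Zb" "Da \<noteq> 0" "Db \<noteq> 0"
    and "Dc * Za * Zb = Da * Db * Zc"
  shows "ya * yb * Dc = Zc"
proof -
  have "Da * Db * (ya * yb * Dc - Zc) = Dc * (ya * Da) * (yb * Db) - Da * Db * Zc"
    by (simp add: algebra_simps)
  also have "\<dots> = 0" using assms(1,2,5) by simp
  finally show ?thesis using assms(3,4) by simp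
qed

lemma power_reductions:
  fixes x y T :: "'a::{idom,ring_char_0}"
  assumes f: "f_t_cleared T x = 0"
    and nz: "q2 T \<noteq> 0" "T \<noteq> 2" "q4 T \<noteq> 0"
    and y1: "y * (q2 T * (T - 2)^2 * q4 T) = Y1 T x"
  shows "y^2 * (q2 T * q4 T) = Y2 T x"
    and "y^3 * (q2 T * (T - 2) * q4 T) = Y3 T x"
    and "y^4 * (q2 T * q4 T) = Y4 T x"
    and "y^5 = - 1 - x^5"
    and "y^6 * (q2 T^2 * (T - 2) * q4 T) = Y6 T x"
proof -
  note defs = f_t_cleared_def q2_def q4_def Y1_def Y2_def Y3_def Y4_def Y6_def
  have nz1: "q2 T * (T - 2)^2 * q4 T \<noteq> 0" and nz2: "q2 T * q4 T \<noteq> 0"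
    and nz3: "q2 T * (T - 2) * q4 T \<noteq> 0"
    using nz by auto
  have "q2 T * q4 T * Y1 T x * Y1 T x
      = (q2 T * (T - 2)^2 * q4 T) * (q2 T * (T - 2)^2 * q4 T) * Y2 T x"
    using f unfolding defs by algebra
  from mult_reduction[OF y1 y1 nz1 nz1 this]
  show y2: "y^2 * (q2 T * q4 T) = Y2 T x" by (simp add: power2_eq_square)
  have "q2 T * (T - 2) * q4 T * Y2 T x * Y1 T x
      = q2 T * q4 T * (q2 T * (T - 2)^2 * q4 T) * Y3 T x"
    using f unfolding defs by algebra
  from mult_reduction[OF y2 y1 nz2 nz1 this]
  show y3: "y^3 * (q2 T * (T - 2) * q4 T) = Y3 T x" by (simp add: power3_eq_cube power2_eq_square)
  have "q2 T * q4 T * Y2 T x * Y2 T x = (q2 T * q4 T) * (q2 T * q4 T) * Y4 T x"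
    using f unfolding defs by algebra
  from mult_reduction[OF y2 y2 nz2 nz2 this]
  show y4: "y^4 * (q2 T * q4 T) = Y4 T x" by (simp flip: power_add)
  have "1 * Y4 T x * Y1 T x = (q2 T * q4 T) * (q2 T * (T - 2)^2 * q4 T) * (- 1 - x^5)"
    using f unfolding defs by algebra
  from mult_reduction[OF y4 y1 nz2 nz1 this]
  show "y^5 = - 1 - x^5" by (simp flip: power_Suc2)
  have "q2 T^2 * (T - 2) * q4 T * Y3 T x * Y3 T x
      = (q2 T * (T - 2) * q4 T) * (q2 T * (T - 2) * q4 T) * Y6 T x"
    using f unfolding defs by algebra
  from mult_reduction[OF y3 y3 nz3 nz3 this]
  show "y^6 * (q2 T^2 * (T - 2) * q4 T) = Y6 T x" by (simp flip: power_add)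
qed

lemma conic_of_reductions:
  fixes x y T :: "'a::{idom,ring_char_0}"
  assumes f: "f_t_cleared T x = 0"
    and nz: "q2 T \<noteq> 0" "T \<noteq> 2" "q4 T \<noteq> 0"
    and y1: "y * (q2 T * (T - 2)^2 * q4 T) = Y1 T x"
    and y2: "y^2 * (q2 T * q4 T) = Y2 T x"
  shows "x^2 + y^2 + 1 + T * (x*y + x + y) = 0"
proof -
  let ?D1 = "q2 T * (T - 2)^2 * q4 T" and ?D2 = "q2 T * q4 T"
  have "?D1 * ?D2 * (x^2 + y^2 + 1 + T * (x*y + x + y))
      = ?D1 * ?D2 * (x^2 + 1) + ?D1 * (y^2 * ?D2) + T * (?D2 * (x + 1) * (y * ?D1) + ?D1 * ?D2 * x)"
    by (simp add: algebra_simps power2_eq_square)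
  also have "\<dots> = ?D1 * ?D2 * (x^2 + 1) + ?D1 * Y2 T x + T * (?D2 * (x + 1) * Y1 T x + ?D1 * ?D2 * x)"
    by (simp only: y1 y2)
  also have "\<dots> = 0"
    using f unfolding f_t_cleared_def q2_def q4_def Y1_def Y2_def by algebra
  finally show ?thesis using nz by simp
qed

lemma f_t_cleared_of_reductions:
  fixes x y T :: "'a::{idom,ring_char_0}"
  assumes nz: "q2 T \<noteq> 0" "T \<noteq> 2" "q4 T \<noteq> 0"
    and y1: "y * (q2 T * (T - 2)^2 * q4 T) = Y1 T x"
    and y2: "y^2 * (q2 T * q4 T) = Y2 T x"
    and y3: "y^3 * (q2 T * (T - 2) * q4 T) = Y3 T x"
    and y4: "y^4 * (q2 T * q4 T) = Y4 T x"
    and y5: "y^5 = - 1 - x^5"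
    and y6: "y^6 * (q2 T^2 * (T - 2) * q4 T) = Y6 T x"
  shows "f_t_cleared T y = 0"
proof -
  define c0 c1 c2 c3 where
    "c0 = (T - 2) * q2 T^2" and "c1 = (T - 2) * q2 T * (3*T^2 - 2*T + 2)"
    and "c2 = T^5 - 5*T^4 + 10*T^3 - 20*T^2 + 15*T - 7"
    and "c3 = - 3*T^5 + 10*T^4 - 20*T^3 + 20*T^2 - 20*T + 6"
  let ?M = "q2 T^2 * (T - 2)^2 * q4 T"
  have "?M * f_t_cleared T y
      = ?M * c0 + c1 * q2 T * (y * (q2 T * (T - 2)^2 * q4 T))
      + c2 * q2 T * (T - 2)^2 * (y^2 * (q2 T * q4 T))
      + c3 * q2 T * (T - 2) * (y^3 * (q2 T * (T - 2) * q4 T))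
      + c2 * q2 T * (T - 2)^2 * (y^4 * (q2 T * q4 T)) + ?M * c1 * y^5
      + c0 * (T - 2) * (y^6 * (q2 T^2 * (T - 2) * q4 T))"
    unfolding f_t_cleared_def c0_def c1_def c2_def c3_def by algebra
  also have "\<dots> = ?M * c0 + c1 * q2 T * Y1 T x + c2 * q2 T * (T - 2)^2 * Y2 T x
      + c3 * q2 T * (T - 2) * Y3 T x + c2 * q2 T * (T - 2)^2 * Y4 T x + ?M * c1 * (- 1 - x^5)
      + c0 * (T - 2) * Y6 T x"
    by (simp only: y1 y2 y3 y4 y5 y6)
  also have "\<dots> = 0"
    unfolding c0_def c1_def c2_def c3_def q2_def q4_def Y1_def Y2_def Y3_def Y4_def Y6_def
    by algebra
  finally show ?thesis using nz by simp
qed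

lemmas of_rat_ring_simps = of_rat_add of_rat_diff of_rat_mult of_rat_power of_rat_minus

lemma of_rat_q2: "of_rat (q2 t) = q2 (of_rat t)"
  by (simp add: q2_def of_rat_ring_simps)

lemma of_rat_q4: "of_rat (q4 t) = q4 (of_rat t)"
  by (simp add: q4_def of_rat_ring_simps)

lemma of_rat_factors_nonzero:
  assumes "t \<noteq> 2"
  shows "q2 (of_rat t :: 'a::field_char_0) \<noteq> 0" and "of_rat t \<noteq> (2::'a)"
    and "q4 (of_rat t :: 'a) \<noteq> 0"
proof -
  show "of_rat t \<noteq> (2::'a)" using assms by (metis of_rat_eq_iff of_rat_numeral_eq)
  show "q2 (of_rat t :: 'a) \<noteq> 0" "q4 (of_rat t :: 'a) \<noteq> 0"
    using q2_rat_nonzero[of t] q4_rat_nonzero[of t] by (simp_all flip: of_rat_q2 of_rat_q4)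
qed

lemma poly_f_t_cleared:
  fixes z :: "'a::field_char_0"
  assumes "t \<noteq> 2"
  shows "(of_rat t - 2) * q2 (of_rat t)^2 * poly (map_poly of_rat (f_t t)) z = f_t_cleared (of_rat t) z"
proof -
  define T :: 'a where "T = of_rat t"
  have nz: "q2 T \<noteq> 0" "T - 2 \<noteq> 0"
    using of_rat_factors_nonzero[OF assms] by (simp_all add: T_def)
  have "of_rat (ft_u t) = (3*T^2 - 2*T + 2) / q2 T"
    and "of_rat (ft_v t) = (T^5 - 5*T^4 + 10*T^3 - 20*T^2 + 15*T - 7) / ((T - 2) * q2 T^2)"
    and "of_rat (ft_w t) = (- 3*T^5 + 10*T^4 - 20*T^3 + 20*T^2 - 20*T + 6) / ((T - 2) * q2 T^2)"
    by (simp_all add: T_def q2_def ft_u_def ft_v_def ft_w_def of_rat_ring_simps of_rat_divide)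
  then show ?thesis
    using nz unfolding T_def[symmetric]
    by (simp add: f_t_def map_poly_pCons f_t_cleared_def field_simps) algebra
qed

lemma mult_eq_if_divide_eq:
  fixes a b c d n :: "'a::field"
  assumes "b \<noteq> 0" "a = n / b" "d = b * c"
  shows "a * d = n * c"
  using assms by simp

lemma a_coef_sum_cleared:
  fixes x :: "'a::field_char_0"
  assumes "t \<noteq> 2"
  shows "(\<Sum>i\<le>5. of_rat (a_coef t i) * x^i) * (q2 (of_rat t) * (of_rat t - 2)^2 * q4 (of_rat t))
         = Y1 (of_rat t) x"
proof -
  define T :: 'a where "T = of_rat t"
  define D where "D = q2 T * (T - 2)^2 * q4 T"
  have nz: "q2 T \<noteq> 0" "T - 2 \<noteq> 0" "q4 T \<noteq> 0"
    using of_rat_factors_nonzero[OF assms] by (simp_all add: T_def)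
  have a: "of_rat (a_coef t 0) = - ((T^2 + 1) * (T^3 - T^2 + 2*T - 3)) / (q4 T * (T - 2))"
    "of_rat (a_coef t 1) = - (3*T^7 - 9*T^6 + 16*T^5 - 15*T^4 + 10*T^3 - 11*T^2 + 8*T - 7)
                               / (q2 T * (q4 T * (T - 2)))"
    "of_rat (a_coef t 2) = (2*T^8 - 14*T^7 + 52*T^6 - 99*T^5 + 100*T^4 - 54*T^3 + 38*T^2 - 44*T + 13)
                               / (q2 T * (T - 2) * (q4 T * (T - 2)))"
    "of_rat (a_coef t 3) = (T^8 + T^7 - 21*T^6 + 65*T^5 - 90*T^4 + 78*T^3 - 57*T^2 + 32*T - 15)
                               / (q2 T * (T - 2) * (q4 T * (T - 2)))"
    "of_rat (a_coef t 4) = - (2*T^5 - 6*T^4 + 13*T^3 - 14*T^2 + 7*T - 5) / (q4 T * (T - 2))"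
    "of_rat (a_coef t 5) = - (q2 T * (T^3 - T^2 + 2*T - 3)) / (q4 T * (T - 2))"
    by (simp_all add: T_def a_coef_def s_t_def q2_def q4_def of_rat_ring_simps of_rat_divide)
  have e0: "of_rat (a_coef t 0) * D = - ((T^2 + 1) * (T^3 - T^2 + 2*T - 3)) * (q2 T * (T - 2))"
    by (rule mult_eq_if_divide_eq[OF _ a(1)]) (use nz in \<open>simp_all add: D_def power2_eq_square\<close>)
  have e1: "of_rat (a_coef t 1) * D
      = - (3*T^7 - 9*T^6 + 16*T^5 - 15*T^4 + 10*T^3 - 11*T^2 + 8*T - 7) * (T - 2)"
    by (rule mult_eq_if_divide_eq[OF _ a(2)]) (use nz in \<open>simp_all add: D_def power2_eq_square\<close>)
  have e2: "of_rat (a_coef t 2) * D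
      = (2*T^8 - 14*T^7 + 52*T^6 - 99*T^5 + 100*T^4 - 54*T^3 + 38*T^2 - 44*T + 13) * 1"
    by (rule mult_eq_if_divide_eq[OF _ a(3)]) (use nz in \<open>simp_all add: D_def power2_eq_square\<close>)
  have e3: "of_rat (a_coef t 3) * D
      = (T^8 + T^7 - 21*T^6 + 65*T^5 - 90*T^4 + 78*T^3 - 57*T^2 + 32*T - 15) * 1"
    by (rule mult_eq_if_divide_eq[OF _ a(4)]) (use nz in \<open>simp_all add: D_def power2_eq_square\<close>)
  have e4: "of_rat (a_coef t 4) * D
      = - (2*T^5 - 6*T^4 + 13*T^3 - 14*T^2 + 7*T - 5) * (q2 T * (T - 2))"
    by (rule mult_eq_if_divide_eq[OF _ a(5)]) (use nz in \<open>simp_all add: D_def power2_eq_square\<close>)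
  have e5: "of_rat (a_coef t 5) * D = - (q2 T * (T^3 - T^2 + 2*T - 3)) * (q2 T * (T - 2))"
    by (rule mult_eq_if_divide_eq[OF _ a(6)]) (use nz in \<open>simp_all add: D_def power2_eq_square\<close>)
  have "(\<Sum>i\<le>5. of_rat (a_coef t i) * x^i) * D
      = of_rat (a_coef t 0) * D + of_rat (a_coef t 1) * D * x + of_rat (a_coef t 2) * D * x^2
      + of_rat (a_coef t 3) * D * x^3 + of_rat (a_coef t 4) * D * x^4 + of_rat (a_coef t 5) * D * x^5"
    by (simp add: atMost_Suc numeral_eq_Suc algebra_simps)
  also have "\<dots> = Y1 T x"
    unfolding e0 e1 e2 e3 e4 e5 Y1_def q2_def by algebra
  finally have "(\<Sum>i\<le>5. of_rat (a_coef t i) * x^i) * D = Y1 T x" .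
  then show ?thesis by (simp add: D_def T_def)
qed

theorem proposition3:
  fixes t :: rat and x :: complex
  assumes "t \<noteq> 2"
    and "poly (map_poly of_rat (f_t t)) x = 0"
  defines "y \<equiv> (\<Sum>i\<le>5. of_rat (a_coef t i) * x ^ i)"
  shows "poly (map_poly of_rat (f_t t)) y = 0 \<and> on_F5 x y 1 \<and> on_Ct t x y 1"
proof -
  define T where "T = (of_rat t :: complex)"
  have nz: "q2 T \<noteq> 0" "T \<noteq> 2" "q4 T \<noteq> 0"
    using of_rat_factors_nonzero[OF assms(1)] by (simp_all add: T_def)
  have fx: "f_t_cleared T x = 0"
    using poly_f_t_cleared[OF assms(1), of x] assms(2) by (simp add: T_def)
  have y1: "y * (q2 T * (T - 2)^2 * q4 T) = Y1 T x"
    using a_coef_sum_cleared[OF assms(1)] unfolding y_def T_def .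
  note reductions = power_reductions[OF fx nz y1]
  have "f_t_cleared T y = 0"
    by (rule f_t_cleared_of_reductions[OF nz y1 reductions])
  then have "poly (map_poly of_rat (f_t t)) y = 0"
    using poly_f_t_cleared[OF assms(1), of y] nz by (simp add: T_def)
  moreover have "on_F5 x y 1"
    using reductions(4) by (simp add: on_F5_def)
  moreover have "on_Ct t x y 1"
    using conic_of_reductions[OF fx nz y1 reductions(1)] by (simp add: on_Ct_def T_def)
  ultimately show ?thesis by blast
qed

end
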